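(* Let $\omega$ be a weight function and let $\mathcal M_\omega=(\mathbf W^{(\lambda)})_{\lambda>0}$, $W^{(\lambda)}_\alpha:=e^{\frac1\lambda\varphi^*_\omega(\lambda|\alpha|)}$ ($\lambda>0$, $\alpha\in\mathbb N_0^d$). Then $\mathcal S_{\{\mathcal M_\omega\}}=\mathcal S_{\{\omega\}}(\mathbb R^d)$ and $\mathcal S_{(\mathcal M_\omega)}=\mathcal S_{(\omega)}(\mathbb R^d)$, and these equalities are also topological.
   Context: A weight function is a continuous increasing function $\omega:[0,+\infty)\to[0,+\infty)$ such that: ($\alpha$) there is $L\ge1$ with $\omega(2t)\le L(\omega(t)+1)$ for all $t\ge0$; ($\beta$) $\omega(t)=O(t^2)$ as $t\to+\infty$; ($\gamma$) $\log t=o(\omega(t))$ as $t\to+\infty$; ($\delta$) $\varphi_\omega(t):=\omega(e^t)$ is convex on $[0,+\infty)$. Young conjugate: $\varphi_\omega^*(s):=\sup_{t\ge0}\{ts-\varphi_\omega(t)\}$. For a family $\mathcal M=(\mathbf M^{(\lambda)})_{\lambda>0}$ of positive sequences on $\mathbb N_0^d$ and $h>0$, $\|f\|_{\infty,\mathbf M^{(\lambda)},h}:=\sup_{\alpha,\beta\in\mathbb N_0^d}\frac{\|x^\alpha\partial^\beta f\|_\infty}{h^{|\alpha+\beta|}M^{(\lambda)}_{\alpha+\beta}}$; $\mathcal S_{\{\mathcal M\}}$ is the set of $f\in C^\infty(\mathbb R^d)$ with $\|f\|_{\infty,\mathbf M^{(\lambda)},h}<\infty$ for some $\lambda,h>0$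 (inductive limit topology) and $\mathcal S_{(\mathcal M)}$ the set with this finite for all $\lambda,h>0$ (projective limit topology). With $\|f\|_{\infty,\mathbf W^{(\lambda)}}:=\sup_{\alpha,\beta\in\mathbb N_0^d}\frac{\|x^\alpha\partial^\beta f\|_\infty}{W^{(\lambda)}_{\alpha+\beta}}$, $\mathcal S_{\{\omega\}}(\mathbb R^d)$ is the set of $f\in C^\infty(\mathbb R^d)$ with $\|f\|_{\infty,\mathbf W^{(\lambda)}}<\infty$ for some $\lambda>0$ (inductive limit topology), and $\mathcal S_{(\omega)}(\mathbb R^d)$ the set with $\|f\|_{\infty,\mathbf W^{(\lambda)}}<\infty$ for all $\lambda>0$ (projective limit topology). *)

theory Defs
  imports "HOL-Analysis.Analysis" "HOL-Library.Landau_Symbols"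
begin

definition weight_function :: "(real \<Rightarrow> real) \<Rightarrow> bool" where
  "weight_function \<omega> \<longleftrightarrow>
     continuous_on {0..} \<omega> \<and> mono_on {0..} \<omega> \<and> (\<forall>t\<ge>0. \<omega> t \<ge> 0) \<and>
     (\<exists>L\<ge>1. \<forall>t\<ge>0. \<omega> (2 * t) \<le> L * (\<omega> t + 1)) \<and>
     \<omega> \<in> O[at_top](\<lambda>t. t ^ 2) \<and>
     (\<lambda>t. ln t) \<in> o[at_top](\<omega>) \<and>
     convex_on {0..} (\<lambda>t. \<omega> (exp t))"

definition phi_star :: "(real \<Rightarrow> real) \<Rightarrow> real \<Rightarrow> real" where
  "phi_star \<omega> s = Sup {t * s - \<omega> (exp t) | t. t \<ge> 0}"

type_synonym 'd mindex = "'d \<Rightarrow> nat"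

definition mlen :: "'d::finite mindex \<Rightarrow> nat" where
  "mlen \<alpha> = (\<Sum>i\<in>UNIV. \<alpha> i)"

definition monom :: "'d::finite mindex \<Rightarrow> real^'d \<Rightarrow> real" where
  "monom \<alpha> x = (\<Prod>i\<in>UNIV. (x $ i) ^ \<alpha> i)"

definition partial :: "'d::finite \<Rightarrow> (real^'d \<Rightarrow> complex) \<Rightarrow> real^'d \<Rightarrow> complex" where
  "partial i f = (\<lambda>x. vector_derivative (\<lambda>t. f (x + t *\<^sub>R axis i 1)) (at 0))"

fun partials :: "'d::finite list \<Rightarrow> (real^'d \<Rightarrow> complex) \<Rightarrow> real^'d \<Rightarrow> complex" where
  "partials [] f = f"
| "partials (i # is) f = partial i (partials is f)"

text \<open>\<open>\<partial>^\<beta>\<close>: iterated partial derivatives in any order containing each direction \<open>i\<close>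
  exactly \<open>\<beta> i\<close> times (the order is irrelevant for smooth functions).\<close>
definition dpart :: "'d::finite mindex \<Rightarrow> (real^'d \<Rightarrow> complex) \<Rightarrow> real^'d \<Rightarrow> complex" where
  "dpart \<beta> f = partials (SOME ds. \<forall>i. count_list ds i = \<beta> i) f"

definition smooth :: "(real^'d::finite \<Rightarrow> complex) \<Rightarrow> bool" where
  "smooth f \<longleftrightarrow> (\<forall>ds x. partials ds f differentiable (at x))"

definition wnorm :: "('d::finite mindex \<Rightarrow> real) \<Rightarrow> (real^'d \<Rightarrow> complex) \<Rightarrow> ennreal" where
  "wnorm M f = (SUP \<alpha>. SUP \<beta>. SUP x.
      ennreal (cmod (of_real (monom \<alpha> x) * dpart \<beta> f x) / M (\<lambda>i. \<alpha> i + \<beta> i)))"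

definition wnorm_h :: "('d::finite mindex \<Rightarrow> real) \<Rightarrow> real \<Rightarrow> (real^'d \<Rightarrow> complex) \<Rightarrow> ennreal" where
  "wnorm_h M h f = wnorm (\<lambda>\<gamma>. h ^ mlen \<gamma> * M \<gamma>) f"

definition Wseq :: "(real \<Rightarrow> real) \<Rightarrow> real \<Rightarrow> 'd::finite mindex \<Rightarrow> real" where
  "Wseq \<omega> lam \<alpha> = exp ((1 / lam) * phi_star \<omega> (lam * real (mlen \<alpha>)))"

definition abs_convex :: "(real^'d::finite \<Rightarrow> complex) set \<Rightarrow> bool" where
  "abs_convex V \<longleftrightarrow> (\<forall>f\<in>V. \<forall>g\<in>V. \<forall>a b::complex. cmod a + cmod b \<le> 1 \<longrightarrow>
       (\<lambda>x. a * f x + b * g x) \<in> V)"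

definition roum_space :: "'i set \<Rightarrow> ('i \<Rightarrow> (real^'d::finite \<Rightarrow> complex) \<Rightarrow> ennreal)
    \<Rightarrow> (real^'d \<Rightarrow> complex) set" where
  "roum_space I p = {f. smooth f \<and> (\<exists>i\<in>I. p i f < \<infinity>)}"

definition beur_space :: "'i set \<Rightarrow> ('i \<Rightarrow> (real^'d::finite \<Rightarrow> complex) \<Rightarrow> ennreal)
    \<Rightarrow> (real^'d \<Rightarrow> complex) set" where
  "beur_space I p = {f. smooth f \<and> (\<forall>i\<in>I. p i f < \<infinity>)}"

text \<open>Locally convex inductive limit of the normed spaces \<open>E_i = {f. p i f < \<infinity>}\<close>:
  0-neighbourhood base = absolutely convex \<open>V\<close> such that \<open>V \<inter> E_i\<close> is a 0-neighbourhood
  in every \<open>E_i\<close>.\<close>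
definition ind_topology :: "'i set \<Rightarrow> ('i \<Rightarrow> (real^'d::finite \<Rightarrow> complex) \<Rightarrow> ennreal)
    \<Rightarrow> (real^'d \<Rightarrow> complex) topology" where
  "ind_topology I p = topology (\<lambda>U. U \<subseteq> roum_space I p \<and>
     (\<forall>f\<in>U. \<exists>V. V \<subseteq> roum_space I p \<and> abs_convex V \<and>
        (\<forall>i\<in>I. \<exists>\<epsilon>>0. {g\<in>roum_space I p. p i g < ennreal \<epsilon>} \<subseteq> V) \<and>
        (\<lambda>g x. f x + g x) ` V \<subseteq> U))"

definition proj_topology :: "'i set \<Rightarrow> ('i \<Rightarrow> (real^'d::finite \<Rightarrow> complex) \<Rightarrow> ennreal)
    \<Rightarrow> (real^'d \<Rightarrow> complex) topology" where
  "proj_topology I p = topology (\<lambda>U. U \<subseteq> beur_space I p \<and>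
     (\<forall>f\<in>U. \<exists>F \<epsilon>. finite F \<and> F \<subseteq> I \<and> \<epsilon> > 0 \<and>
        {g\<in>beur_space I p. \<forall>i\<in>F. p i (\<lambda>x. g x - f x) < ennreal \<epsilon>} \<subseteq> U))"

definition Mw_norms :: "(real \<Rightarrow> real) \<Rightarrow> real \<times> real \<Rightarrow> (real^'d::finite \<Rightarrow> complex) \<Rightarrow> ennreal" where
  "Mw_norms \<omega> = (\<lambda>(lam, h). wnorm_h (Wseq \<omega> lam) h)"

definition omega_norms :: "(real \<Rightarrow> real) \<Rightarrow> real \<Rightarrow> (real^'d::finite \<Rightarrow> complex) \<Rightarrow> ennreal" where
  "omega_norms \<omega> = (\<lambda>lam. wnorm (Wseq \<omega> lam))"

end

theory Submission
  imports Defs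
begin

text \<open>The doubling condition \<open>\<omega>(2t) \<le> L (\<omega>(t) + 1)\<close>, used at the point \<open>t + ln 2\<close> of the
  supremum defining \<open>\<phi>\<^sup>*\<^sub>\<omega>\<close>, gives \<open>2^|\<alpha>| W^(\<lambda>)_\<alpha> \<le> e^(1/\<lambda>) W^(L\<lambda>)_\<alpha>\<close>. Iterating, a geometric
  factor \<open>h^|\<alpha>|\<close> is absorbed, up to a constant, by replacing \<open>\<lambda>\<close> with \<open>L^n \<lambda>\<close>. Hence every
  \<open>\<parallel>\<cdot>\<parallel>_{\<infinity>,W^(\<lambda>),h}\<close> dominates some \<open>\<parallel>\<cdot>\<parallel>_{\<infinity>,W^(\<kappa>)}\<close> and is dominated by another one, while
  \<open>\<parallel>\<cdot>\<parallel>_{\<infinity>,W^(\<lambda>)}\<close> is the member \<open>h = 1\<close> of the first family. Two families of seminorms that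
  dominate each other in this way have the same inductive and projective limits, as sets and
  as topologies.\<close>

subsection \<open>Equivalent families of seminorms\<close>

definition seminorm_dominated :: "('a \<Rightarrow> ennreal) \<Rightarrow> ('a \<Rightarrow> ennreal) \<Rightarrow> bool" where
  "seminorm_dominated q p \<longleftrightarrow> (\<exists>C>0. \<forall>g. q g \<le> ennreal C * p g)"

lemma seminorm_dominated_refl: "seminorm_dominated p p"
  unfolding seminorm_dominated_def by (intro exI[of _ 1]) simp

lemma seminorm_dominated_finite:
  assumes "seminorm_dominated q p" "p g < \<infinity>"
  shows "q g < \<infinity>"
proof -
  obtain C where "q g \<le> ennreal C * p g" using assms(1) unfolding seminorm_dominated_def by blast
  moreover have "ennreal C * p g < \<infinity>" using assms(2) by (simp add: ennreal_mult_less_top)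
  ultimately show ?thesis by (rule le_less_trans)
qed

lemma seminorm_dominated_ball:
  assumes "seminorm_dominated q p" "\<epsilon> > 0"
  obtains \<delta> where "\<delta> > 0" "\<And>g. p g < ennreal \<delta> \<Longrightarrow> q g < ennreal \<epsilon>"
proof -
  obtain C where C: "C > 0" "\<And>g. q g \<le> ennreal C * p g"
    using assms(1) unfolding seminorm_dominated_def by blast
  show ?thesis
  proof
    show "\<epsilon> / C > 0" using C(1) assms(2) by simp
    fix g assume "p g < ennreal (\<epsilon> / C)"
    then have "ennreal C * p g < ennreal C * ennreal (\<epsilon> / C)"
      using C(1) by (intro ennreal_mult_strict_left_mono) auto
    also have "\<dots> = ennreal \<epsilon>" using C(1) assms(2) by (simp flip: ennreal_mult)
    finally show "q g < ennreal \<epsilon>" using C(2)[of g] by (rule le_less_trans[rotated])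
  qed
qed

lemma roum_space_subset:
  assumes "\<forall>i\<in>I. \<exists>j\<in>J. seminorm_dominated (q j) (p i)"
  shows "roum_space I p \<subseteq> roum_space J q"
proof
  fix f assume "f \<in> roum_space I p"
  then obtain i where f: "smooth f" "i \<in> I" "p i f < \<infinity>" unfolding roum_space_def by blast
  then obtain j where j: "j \<in> J" "seminorm_dominated (q j) (p i)" using assms by blast
  have "q j f < \<infinity>" using f(3) by (rule seminorm_dominated_finite[OF j(2)])
  with f(1) j(1) show "f \<in> roum_space J q" unfolding roum_space_def by blast
qed

lemma beur_space_subset:
  assumes "\<forall>j\<in>J. \<exists>i\<in>I. seminorm_dominated (q j) (p i)"
  shows "beur_space I p \<subseteq> beur_space J q"
proof
  fix f assume f: "f \<in> beur_space I p"
  show "f \<in> beur_space J q" unfolding beur_space_def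
  proof (intro CollectI conjI ballI)
    show "smooth f" using f unfolding beur_space_def by blast
    fix j assume "j \<in> J"
    then obtain i where i: "i \<in> I" "seminorm_dominated (q j) (p i)" using assms by blast
    with f have "p i f < \<infinity>" unfolding beur_space_def by blast
    then show "q j f < \<infinity>" by (rule seminorm_dominated_finite[OF i(2)])
  qed
qed

lemma ind_neighbourhood_transfer:
  assumes "\<forall>i\<in>I. \<exists>j\<in>J. seminorm_dominated (q j) (p i)"
    and "\<forall>j\<in>J. \<exists>\<epsilon>>0. {g\<in>R. q j g < ennreal \<epsilon>} \<subseteq> V"
  shows "\<forall>i\<in>I. \<exists>\<delta>>0. {g\<in>R. p i g < ennreal \<delta>} \<subseteq> V"
proof
  fix i assume "i \<in> I"
  then obtain j where j: "j \<in> J" "seminorm_dominated (q j) (p i)" using assms(1) by blast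
  then obtain \<epsilon> where \<epsilon>: "\<epsilon> > 0" "{g\<in>R. q j g < ennreal \<epsilon>} \<subseteq> V" using assms(2) by blast
  obtain \<delta> where "\<delta> > 0" "\<And>g. p i g < ennreal \<delta> \<Longrightarrow> q j g < ennreal \<epsilon>"
    using seminorm_dominated_ball[OF j(2) \<epsilon>(1)] by blast
  with \<epsilon>(2) show "\<exists>\<delta>>0. {g\<in>R. p i g < ennreal \<delta>} \<subseteq> V" by blast
qed

lemma proj_neighbourhood_transfer:
  assumes dom: "\<forall>j\<in>J. \<exists>i\<in>I. seminorm_dominated (q j) (p i)"
    and G: "finite G" "G \<subseteq> J" and \<epsilon>: "\<epsilon> > 0"
    and U: "{g\<in>B. \<forall>j\<in>G. q j (\<lambda>x. g x - f x) < ennreal \<epsilon>} \<subseteq> U"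
  shows "\<exists>F \<delta>. finite F \<and> F \<subseteq> I \<and> \<delta> > 0 \<and> {g\<in>B. \<forall>i\<in>F. p i (\<lambda>x. g x - f x) < ennreal \<delta>} \<subseteq> U"
proof -
  have "\<forall>j\<in>G. \<exists>i \<delta>. i \<in> I \<and> \<delta> > 0 \<and> (\<forall>g. p i g < ennreal \<delta> \<longrightarrow> q j g < ennreal \<epsilon>)"
  proof
    fix j assume "j \<in> G"
    then obtain i where "i \<in> I" "seminorm_dominated (q j) (p i)" using dom G(2) by blast
    with seminorm_dominated_ball[OF _ \<epsilon>] show "\<exists>i \<delta>. i \<in> I \<and> \<delta> > 0 \<and> (\<forall>g. p i g < ennreal \<delta> \<longrightarrow> q j g < ennreal \<epsilon>)"
      by metis
  qed
  then obtain ii \<delta> where ii: "\<And>j. j \<in> G \<Longrightarrow> ii j \<in> I \<and> \<delta> j > 0 \<and>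
      (\<forall>g. p (ii j) g < ennreal (\<delta> j) \<longrightarrow> q j g < ennreal \<epsilon>)"
    by metis
  define \<delta>\<^sub>0 where "\<delta>\<^sub>0 = Min (insert 1 (\<delta> ` G))"
  have "\<delta>\<^sub>0 > 0" using G(1) ii unfolding \<delta>\<^sub>0_def by auto
  moreover have "\<delta>\<^sub>0 \<le> \<delta> j" if "j \<in> G" for j using G(1) that unfolding \<delta>\<^sub>0_def by simp
  ultimately have "{g\<in>B. \<forall>i\<in>ii ` G. p i (\<lambda>x. g x - f x) < ennreal \<delta>\<^sub>0} \<subseteq> U"
    using ii U by (fastforce intro: less_le_trans ennreal_leI)
  then show ?thesis using \<open>\<delta>\<^sub>0 > 0\<close> G(1) ii by blast
qed

lemma roum_space_eq:
  assumes "\<forall>i\<in>I. \<exists>j\<in>J. seminorm_dominated (q j) (p i)"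
    and "\<forall>j\<in>J. \<exists>i\<in>I. seminorm_dominated (p i) (q j)"
  shows "roum_space I p = roum_space J q"
  using roum_space_subset[OF assms(1)] roum_space_subset[OF assms(2)] by (rule subset_antisym)

lemma ind_topology_eq:
  assumes "\<forall>i\<in>I. \<exists>j\<in>J. seminorm_dominated (q j) (p i)"
    and "\<forall>j\<in>J. \<exists>i\<in>I. seminorm_dominated (p i) (q j)"
  shows "ind_topology I p = ind_topology J q"
proof -
  have "(\<forall>i\<in>I. \<exists>\<epsilon>>0. {g\<in>roum_space J q. p i g < ennreal \<epsilon>} \<subseteq> V)
      \<longleftrightarrow> (\<forall>j\<in>J. \<exists>\<epsilon>>0. {g\<in>roum_space J q. q j g < ennreal \<epsilon>} \<subseteq> V)" for V
    using ind_neighbourhood_transfer[OF assms(1)] ind_neighbourhood_transfer[OF assms(2)] by blast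
  then show ?thesis unfolding ind_topology_def roum_space_eq[OF assms] by (simp only:)
qed

lemma beur_space_eq:
  assumes "\<forall>j\<in>J. \<exists>i\<in>I. seminorm_dominated (q j) (p i)"
    and "\<forall>i\<in>I. \<exists>j\<in>J. seminorm_dominated (p i) (q j)"
  shows "beur_space I p = beur_space J q"
  using beur_space_subset[OF assms(1)] beur_space_subset[OF assms(2)] by (rule subset_antisym)

lemma proj_topology_eq:
  assumes "\<forall>j\<in>J. \<exists>i\<in>I. seminorm_dominated (q j) (p i)"
    and "\<forall>i\<in>I. \<exists>j\<in>J. seminorm_dominated (p i) (q j)"
  shows "proj_topology I p = proj_topology J q"
proof -
  have "(\<exists>F \<epsilon>. finite F \<and> F \<subseteq> I \<and> \<epsilon> > 0 \<and>
          {g\<in>beur_space J q. \<forall>i\<in>F. p i (\<lambda>x. g x - f x) < ennreal \<epsilon>} \<subseteq> U)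
    \<longleftrightarrow> (\<exists>F \<epsilon>. finite F \<and> F \<subseteq> J \<and> \<epsilon> > 0 \<and>
          {g\<in>beur_space J q. \<forall>j\<in>F. q j (\<lambda>x. g x - f x) < ennreal \<epsilon>} \<subseteq> U)" for f U
    using proj_neighbourhood_transfer[OF assms(1)] proj_neighbourhood_transfer[OF assms(2)] by meson
  then show ?thesis unfolding proj_topology_def beur_space_eq[OF assms] by (simp only:)
qed

subsection \<open>The Young conjugate \<open>\<phi>\<^sup>*\<^sub>\<omega>\<close> and the sequences \<open>W\<^sup>(\<^sup>\<lambda>\<^sup>)\<close>\<close>

lemma phi_star_bdd_above:
  fixes \<omega> :: "real \<Rightarrow> real"
  assumes nonneg: "\<And>t. t \<ge> 0 \<Longrightarrow> \<omega> t \<ge> 0" and ln_o: "(\<lambda>t. ln t) \<in> o[at_top](\<omega>)"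
  shows "bdd_above {t * s - \<omega> (exp t) | t. t \<ge> 0}"
proof -
  define c where "c = 1 / (\<bar>s\<bar> + 1)"
  have "c > 0" unfolding c_def by simp
  from landau_o.smallD[OF ln_o this] obtain X where X: "\<And>x. x \<ge> X \<Longrightarrow> \<bar>ln x\<bar> \<le> c * \<bar>\<omega> x\<bar>"
    by (auto simp: eventually_at_top_linorder)
  define T where "T = max 0 (ln (max X 1))"
  show ?thesis
  proof (rule bdd_aboveI[where M = "T * \<bar>s\<bar>"])
    fix y assume "y \<in> {t * s - \<omega> (exp t) | t. t \<ge> 0}"
    then obtain t where t: "t \<ge> 0" "y = t * s - \<omega> (exp t)" by auto
    have \<omega>_exp: "\<omega> (exp t) \<ge> 0" using nonneg by simp
    have ts: "t * s \<le> t * \<bar>s\<bar>" using t(1) by (simp add: mult_left_mono)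
    show "y \<le> T * \<bar>s\<bar>"
    proof (cases "t \<le> T")
      case True
      then have "t * \<bar>s\<bar> \<le> T * \<bar>s\<bar>" by (simp add: mult_right_mono)
      with ts t(2) \<omega>_exp show ?thesis by linarith
    next
      case False
      then have "ln (max X 1) < t" unfolding T_def by simp
      then have "max X 1 < exp t"
        by (metis exp_less_cancel_iff exp_ln max.strict_coboundedI2 zero_less_one)
      then have "exp t \<ge> X" by simp
      from X[OF this] \<omega>_exp have "t * (\<bar>s\<bar> + 1) \<le> \<omega> (exp t)"
        using t(1) unfolding c_def by (simp add: field_simps)
      moreover have "0 \<le> T * \<bar>s\<bar>" unfolding T_def by simp
      ultimately show ?thesis using t ts by (simp add: algebra_simps)
    qed
  qed
qed

lemma weight_function_phi_star_upper:
  assumes "weight_function \<omega>" "t \<ge> 0"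
  shows "t * s - \<omega> (exp t) \<le> phi_star \<omega> s"
proof -
  have "bdd_above {t * s - \<omega> (exp t) | t. t \<ge> 0}"
    using assms(1) unfolding weight_function_def by (intro phi_star_bdd_above) auto
  then show ?thesis unfolding phi_star_def using assms(2) by (intro cSup_upper) auto
qed

lemma phi_star_least:
  assumes "\<And>t. t \<ge> 0 \<Longrightarrow> t * s - \<omega> (exp t) \<le> B"
  shows "phi_star \<omega> s \<le> B"
  unfolding phi_star_def by (rule cSup_least) (use assms in auto)

lemma Wseq_pos: "Wseq \<omega> lam \<gamma> > 0"
  unfolding Wseq_def by simp

lemma phi_star_doubling:
  assumes wf: "weight_function \<omega>"
    and L: "L \<ge> 1" "\<forall>t\<ge>0. \<omega> (2 * t) \<le> L * (\<omega> t + 1)"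
    and \<mu>: "\<mu> > 0" and j: "j \<ge> 0"
  shows "j * ln 2 + phi_star \<omega> (\<mu> * j) / \<mu> - 1 / \<mu> \<le> phi_star \<omega> (L * \<mu> * j) / (L * \<mu>)"
proof -
  define P where "P = phi_star \<omega> (L * \<mu> * j)"
  have "phi_star \<omega> (\<mu> * j) \<le> P / L - ln 2 * \<mu> * j + 1"
  proof (rule phi_star_least)
    fix t :: real assume t: "t \<ge> 0"
    have "(t + ln 2) * (L * \<mu> * j) - \<omega> (exp (t + ln 2)) \<le> P"
      unfolding P_def using t by (intro weight_function_phi_star_upper[OF wf]) auto
    moreover have "\<omega> (exp (t + ln 2)) \<le> L * (\<omega> (exp t) + 1)"
      using L(2) by (simp add: exp_add mult.commute)
    ultimately have "L * ((t + ln 2) * \<mu> * j - \<omega> (exp t) - 1) \<le> P"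
      by (simp add: algebra_simps)
    then show "t * (\<mu> * j) - \<omega> (exp t) \<le> P / L - ln 2 * \<mu> * j + 1"
      using L(1) by (simp add: field_simps)
  qed
  then have "phi_star \<omega> (\<mu> * j) / \<mu> \<le> (P / L - ln 2 * \<mu> * j + 1) / \<mu>"
    using \<mu> by (simp add: divide_right_mono)
  also have "\<dots> = P / (L * \<mu>) - j * ln 2 + 1 / \<mu>"
    using \<mu> L(1) by (simp add: field_simps)
  finally show ?thesis unfolding P_def by simp
qed

lemma Wseq_doubling:
  assumes wf: "weight_function \<omega>"
    and L: "L \<ge> 1" "\<forall>t\<ge>0. \<omega> (2 * t) \<le> L * (\<omega> t + 1)" and \<mu>: "\<mu> > 0"
  shows "2 ^ mlen \<gamma> * Wseq \<omega> \<mu> \<gamma> \<le> exp (1 / \<mu>) * Wseq \<omega> (L * \<mu>) \<gamma>"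
proof -
  define j where "j = real (mlen \<gamma>)"
  have "2 ^ mlen \<gamma> * Wseq \<omega> \<mu> \<gamma> = exp (1 / \<mu>) * exp (j * ln 2 + phi_star \<omega> (\<mu> * j) / \<mu> - 1 / \<mu>)"
    unfolding Wseq_def j_def by (simp add: exp_add exp_diff exp_of_nat_mult)
  also have "\<dots> \<le> exp (1 / \<mu>) * Wseq \<omega> (L * \<mu>) \<gamma>"
    using phi_star_doubling[OF wf L \<mu>, of j] unfolding Wseq_def j_def by (simp add: mult.assoc)
  finally show ?thesis .
qed

lemma Wseq_power_doubling:
  assumes wf: "weight_function \<omega>"
    and L: "L \<ge> 1" "\<forall>t\<ge>0. \<omega> (2 * t) \<le> L * (\<omega> t + 1)"
  shows "\<mu> > 0 \<Longrightarrow> \<exists>C>0. \<forall>\<gamma>::'d::finite mindex. (2 ^ n) ^ mlen \<gamma> * Wseq \<omega> \<mu> \<gamma> \<le> C * Wseq \<omega> (L ^ n * \<mu>) \<gamma>"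
proof (induction n arbitrary: \<mu>)
  case 0
  show ?case by (intro exI[of _ 1]) simp
next
  case (Suc n)
  then have "L * \<mu> > 0" using L(1) by simp
  with Suc.IH obtain C where C: "C > 0"
    "\<And>\<gamma>::'d mindex. (2 ^ n) ^ mlen \<gamma> * Wseq \<omega> (L * \<mu>) \<gamma> \<le> C * Wseq \<omega> (L ^ n * (L * \<mu>)) \<gamma>"
    by blast
  show ?case
  proof (intro exI[of _ "exp (1 / \<mu>) * C"] conjI allI)
    fix \<gamma> :: "'d mindex"
    have "(2 ^ Suc n) ^ mlen \<gamma> * Wseq \<omega> \<mu> \<gamma> = (2 ^ n) ^ mlen \<gamma> * (2 ^ mlen \<gamma> * Wseq \<omega> \<mu> \<gamma>)"
      by (simp add: power_mult_distrib)
    also have "\<dots> \<le> (2 ^ n) ^ mlen \<gamma> * (exp (1 / \<mu>) * Wseq \<omega> (L * \<mu>) \<gamma>)"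
      using Wseq_doubling[OF wf L Suc.prems] by (intro mult_left_mono) auto
    also have "\<dots> \<le> exp (1 / \<mu>) * (C * Wseq \<omega> (L ^ n * (L * \<mu>)) \<gamma>)"
      using C(2)[of \<gamma>] by (simp add: mult.left_commute)
    finally show "(2 ^ Suc n) ^ mlen \<gamma> * Wseq \<omega> \<mu> \<gamma> \<le> exp (1 / \<mu>) * C * Wseq \<omega> (L ^ Suc n * \<mu>) \<gamma>"
      by (simp add: mult.assoc mult.left_commute)
  qed (use C(1) in simp)
qed

lemma Wseq_absorbs_geometric:
  assumes wf: "weight_function \<omega>" and h: "h > 0"
  obtains c where "c > 0"
    "\<And>\<mu>. \<mu> > 0 \<Longrightarrow> \<exists>C>0. \<forall>\<gamma>::'d::finite mindex. h ^ mlen \<gamma> * Wseq \<omega> \<mu> \<gamma> \<le> C * Wseq \<omega> (c * \<mu>) \<gamma>"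
proof -
  obtain L where L: "L \<ge> 1" "\<forall>t\<ge>0. \<omega> (2 * t) \<le> L * (\<omega> t + 1)"
    using wf unfolding weight_function_def by blast
  obtain n where n: "h < 2 ^ n" using real_arch_pow[of 2 h] by auto
  show thesis
  proof
    show "L ^ n > 0" using L(1) by simp
    fix \<mu> :: real assume "\<mu> > 0"
    then obtain C where C: "C > 0"
      "\<And>\<gamma>::'d mindex. (2 ^ n) ^ mlen \<gamma> * Wseq \<omega> \<mu> \<gamma> \<le> C * Wseq \<omega> (L ^ n * \<mu>) \<gamma>"
      using Wseq_power_doubling[OF wf L] by blast
    have "h ^ mlen \<gamma> * Wseq \<omega> \<mu> \<gamma> \<le> C * Wseq \<omega> (L ^ n * \<mu>) \<gamma>" for \<gamma> :: "'d mindex"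
    proof -
      have "h ^ mlen \<gamma> \<le> (2 ^ n) ^ mlen \<gamma>" using h n by (intro power_mono) auto
      then have "h ^ mlen \<gamma> * Wseq \<omega> \<mu> \<gamma> \<le> (2 ^ n) ^ mlen \<gamma> * Wseq \<omega> \<mu> \<gamma>"
        using Wseq_pos[of \<omega> \<mu> \<gamma>] by (simp add: mult_right_mono)
      also have "\<dots> \<le> C * Wseq \<omega> (L ^ n * \<mu>) \<gamma>" by (rule C(2))
      finally show ?thesis .
    qed
    with C(1) show "\<exists>C>0. \<forall>\<gamma>::'d mindex. h ^ mlen \<gamma> * Wseq \<omega> \<mu> \<gamma> \<le> C * Wseq \<omega> (L ^ n * \<mu>) \<gamma>"
      by blast
  qed
qed

subsection \<open>Comparison of the two families of seminorms\<close>

lemma wnorm_dominated: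
  fixes A B :: "'d::finite mindex \<Rightarrow> real"
  assumes "C > 0" "\<And>\<gamma>. 0 < A \<gamma>" "\<And>\<gamma>. A \<gamma> \<le> C * B \<gamma>"
  shows "seminorm_dominated (wnorm B) (wnorm A)"
  unfolding seminorm_dominated_def
proof (intro exI[of _ C] conjI allI)
  fix f :: "real^'d \<Rightarrow> complex"
  have "ennreal (v / B \<gamma>) \<le> ennreal C * ennreal (v / A \<gamma>)" if "v \<ge> 0" for v \<gamma>
  proof -
    have "B \<gamma> > 0" using assms zero_less_mult_pos by (metis less_le_trans)
    have "v * A \<gamma> \<le> v * (C * B \<gamma>)" using assms(3) that by (rule mult_left_mono)
    then have "v / B \<gamma> \<le> C * (v / A \<gamma>)"
      using \<open>B \<gamma> > 0\<close> assms(2) by (simp add: field_simps)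
    then have "ennreal (v / B \<gamma>) \<le> ennreal (C * (v / A \<gamma>))" by (rule ennreal_leI)
    also have "\<dots> = ennreal C * ennreal (v / A \<gamma>)"
      using assms(1) assms(2)[of \<gamma>] that by (intro ennreal_mult) auto
    finally show ?thesis .
  qed
  then show "wnorm B f \<le> ennreal C * wnorm A f"
    unfolding wnorm_def SUP_mult_left_ennreal by (intro SUP_mono') simp
qed (fact assms)

lemma Mw_norms_dominated_by_omega_norms:
  assumes wf: "weight_function \<omega>" and lam: "lam > 0" and h: "h > 0"
  shows "\<exists>\<kappa>>0. seminorm_dominated (Mw_norms \<omega> (lam, h) :: (real^'d::finite \<Rightarrow> complex) \<Rightarrow> ennreal)
                                   (omega_norms \<omega> \<kappa>)"
proof -
  obtain c where c: "c > 0"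
    "\<And>\<mu>. \<mu> > 0 \<Longrightarrow> \<exists>C>0. \<forall>\<gamma>::'d mindex. (1 / h) ^ mlen \<gamma> * Wseq \<omega> \<mu> \<gamma> \<le> C * Wseq \<omega> (c * \<mu>) \<gamma>"
    using Wseq_absorbs_geometric[OF wf, of "1 / h"] h by auto
  have lam_c: "lam / c > 0" using lam c(1) by simp
  with c obtain C where C: "C > 0"
    "\<And>\<gamma>::'d mindex. (1 / h) ^ mlen \<gamma> * Wseq \<omega> (lam / c) \<gamma> \<le> C * Wseq \<omega> lam \<gamma>"
    by fastforce
  have "Wseq \<omega> (lam / c) \<gamma> \<le> C * (h ^ mlen \<gamma> * Wseq \<omega> lam \<gamma>)" for \<gamma> :: "'d mindex"
  proof -
    have "Wseq \<omega> (lam / c) \<gamma> = h ^ mlen \<gamma> * ((1 / h) ^ mlen \<gamma> * Wseq \<omega> (lam / c) \<gamma>)"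
      using h by (simp add: power_one_over)
    also have "\<dots> \<le> h ^ mlen \<gamma> * (C * Wseq \<omega> lam \<gamma>)"
      using C(2) h by (intro mult_left_mono) auto
    finally show ?thesis by (simp add: mult.left_commute)
  qed
  then have "seminorm_dominated (wnorm (\<lambda>\<gamma>::'d mindex. h ^ mlen \<gamma> * Wseq \<omega> lam \<gamma>)) (wnorm (Wseq \<omega> (lam / c)))"
    by (intro wnorm_dominated[OF C(1)] Wseq_pos)
  with lam_c show ?thesis unfolding Mw_norms_def omega_norms_def wnorm_h_def by auto
qed

lemma omega_norms_dominated_by_Mw_norms:
  assumes wf: "weight_function \<omega>" and lam: "lam > 0" and h: "h > 0"
  shows "\<exists>\<kappa>>0. seminorm_dominated (omega_norms \<omega> \<kappa> :: (real^'d::finite \<Rightarrow> complex) \<Rightarrow> ennreal)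
                                   (Mw_norms \<omega> (lam, h))"
proof -
  obtain c where c: "c > 0"
    "\<And>\<mu>. \<mu> > 0 \<Longrightarrow> \<exists>C>0. \<forall>\<gamma>::'d mindex. h ^ mlen \<gamma> * Wseq \<omega> \<mu> \<gamma> \<le> C * Wseq \<omega> (c * \<mu>) \<gamma>"
    using Wseq_absorbs_geometric[OF wf h] by auto
  with lam obtain C where C: "C > 0"
    "\<And>\<gamma>::'d mindex. h ^ mlen \<gamma> * Wseq \<omega> lam \<gamma> \<le> C * Wseq \<omega> (c * lam) \<gamma>"
    by blast
  have "seminorm_dominated (wnorm (Wseq \<omega> (c * lam))) (wnorm (\<lambda>\<gamma>::'d mindex. h ^ mlen \<gamma> * Wseq \<omega> lam \<gamma>))"
    using h by (intro wnorm_dominated[OF C(1)] C(2) mult_pos_pos Wseq_pos zero_less_power)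
  moreover have "c * lam > 0" using lam c(1) by simp
  ultimately show ?thesis unfolding Mw_norms_def omega_norms_def wnorm_h_def by auto
qed

lemma Mw_norms_one: "Mw_norms \<omega> (lam, 1) = omega_norms \<omega> lam"
  unfolding Mw_norms_def omega_norms_def wnorm_h_def by simp

theorem proposition6p3:
  assumes "weight_function \<omega>"
  shows "roum_space ({0<..} \<times> {0<..}) (Mw_norms \<omega> :: real \<times> real \<Rightarrow> (real^'d::finite \<Rightarrow> complex) \<Rightarrow> ennreal)
           = roum_space {0<..} (omega_norms \<omega>)
       \<and> ind_topology ({0<..} \<times> {0<..}) (Mw_norms \<omega> :: real \<times> real \<Rightarrow> (real^'d::finite \<Rightarrow> complex) \<Rightarrow> ennreal)
           = ind_topology {0<..} (omega_norms \<omega>)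
       \<and> beur_space ({0<..} \<times> {0<..}) (Mw_norms \<omega> :: real \<times> real \<Rightarrow> (real^'d::finite \<Rightarrow> complex) \<Rightarrow> ennreal)
           = beur_space {0<..} (omega_norms \<omega>)
       \<and> proj_topology ({0<..} \<times> {0<..}) (Mw_norms \<omega> :: real \<times> real \<Rightarrow> (real^'d::finite \<Rightarrow> complex) \<Rightarrow> ennreal)
           = proj_topology {0<..} (omega_norms \<omega>)"
proof -
  let ?I = "{0<..} \<times> {0<..} :: (real \<times> real) set"
  let ?Mw = "Mw_norms \<omega> :: real \<times> real \<Rightarrow> (real^'d \<Rightarrow> complex) \<Rightarrow> ennreal"
  have Mw_le_omega: "\<forall>i\<in>?I. \<exists>\<kappa>\<in>{0<..}. seminorm_dominated (?Mw i) (omega_norms \<omega> \<kappa>)"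
    using Mw_norms_dominated_by_omega_norms[OF assms] by auto
  have omega_le_Mw: "\<forall>i\<in>?I. \<exists>\<kappa>\<in>{0<..}. seminorm_dominated (omega_norms \<omega> \<kappa>) (?Mw i)"
    using omega_norms_dominated_by_Mw_norms[OF assms] by auto
  have "\<forall>\<kappa>\<in>{0<..}. \<exists>i\<in>?I. ?Mw i = omega_norms \<omega> \<kappa>"
    using Mw_norms_one by fastforce
  then have Mw_le_omega': "\<forall>\<kappa>\<in>{0<..}. \<exists>i\<in>?I. seminorm_dominated (?Mw i) (omega_norms \<omega> \<kappa>)"
    and omega_le_Mw': "\<forall>\<kappa>\<in>{0<..}. \<exists>i\<in>?I. seminorm_dominated (omega_norms \<omega> \<kappa>) (?Mw i)"
    by (metis seminorm_dominated_refl)+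
  show ?thesis
    using roum_space_eq[OF omega_le_Mw Mw_le_omega'] ind_topology_eq[OF omega_le_Mw Mw_le_omega']
      beur_space_eq[OF omega_le_Mw' Mw_le_omega] proj_topology_eq[OF omega_le_Mw' Mw_le_omega]
    by blast
qed

end
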